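(* Let $h$ be a positive integer, let $S$ be an arbitrary set of positive integers, and let $S'=\mathbb{N}_+\setminus\{mh\mid m\in\mathbb{N}_+\setminus S\}$. Then for every integer $n\ge 0$, $$G_{S'}(n)=G_S\left(\left\lfloor\frac{n}{h}\right\rfloor\right)h+(n\bmod h).$$
   Context: $\mathbb{N}_+$ denotes the set of positive integers. For a finite set $T$ of non-negative integers, $\mathrm{mex}\,T$ is the least non-negative integer not in $T$. For a set $S$ of positive integers, $\mathrm{Subtraction}(S)$ is the impartial normal-play game on a single heap, where a move takes a heap of $x$ tokens to a heap of $x-s$ tokens for some $s\in S$ with $s\le x$. Its $\mathcal{G}$-value sequence $G_S$ is defined recursively by $G_S(x)=\mathrm{mex}\{G_S(x-s)\mid s\in S,\ s\le x\}$ for $x=0,1,2,\ldots$. *)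

theory Defs
  imports Main
begin

definition mex :: "nat set \<Rightarrow> nat" where
  "mex T = (LEAST k. k \<notin> T)"

text \<open>G-value sequence of Subtraction(S), S a set of positive integers.
  Only elements s with 1 \<le> s \<le> x are allowed moves from heap x.\<close>
function G :: "nat set \<Rightarrow> nat \<Rightarrow> nat" where
  "G S x = mex ((\<lambda>s. G S (x - s)) ` {s \<in> S. 0 < s \<and> s \<le> x})"
  by auto
termination
  by (relation "measure (\<lambda>(S, x). x)") auto

end

theory Submission
  imports Defs
begin

text \<open>Write a heap of size \<open>n\<close> as \<open>q h + r\<close> with \<open>r < h\<close>. A move of \<open>S'\<close> either removes a
  multiple \<open>m h\<close> with \<open>m \<in> S\<close>, acting as a move of \<open>Subtraction(S)\<close> on \<open>q\<close> and fixing \<open>r\<close>,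
  or removes a non-multiple of \<open>h\<close>, which changes \<open>r\<close>. Hence the candidate value
  \<open>G\<^sub>S(q) h + r\<close> is never the value of an option, while every smaller value \<open>a h + b\<close>
  is: lower \<open>q\<close> to a position of value \<open>a < G\<^sub>S(q)\<close>, or keep \<open>q\<close> and lower \<open>r\<close> to \<open>b\<close>.
  Since the mex recursion determines its solution uniquely, the candidate is \<open>G\<^sub>S'\<close>.\<close>

lemma mex_eqI: "v \<notin> T \<Longrightarrow> (\<And>w. w < v \<Longrightarrow> w \<in> T) \<Longrightarrow> mex T = v"
  unfolding mex_def by (rule Least_equality) (auto simp: not_less[symmetric])

lemma mex_notin: "finite T \<Longrightarrow> mex T \<notin> T"
  unfolding mex_def by (metis LeastI_ex ex_new_if_finite infinite_UNIV_nat)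

lemma less_mex_imp_mem: "w < mex T \<Longrightarrow> w \<in> T"
  unfolding mex_def using not_less_Least by blast

declare G.simps [simp del]

lemma G_move_neq:
  assumes "m \<in> S" "0 < m" "m \<le> x"
  shows "G S (x - m) \<noteq> G S x"
proof -
  let ?T = "(\<lambda>s. G S (x - s)) ` {s \<in> S. 0 < s \<and> s \<le> x}"
  have "G S x \<notin> ?T"
    by (subst G.simps) (rule mex_notin, simp)
  moreover have "G S (x - m) \<in> ?T"
    using assms by blast
  ultimately show ?thesis
    by metis
qed

lemma G_reaches_less:
  assumes "a < G S x"
  shows "\<exists>m\<in>S. 0 < m \<and> m \<le> x \<and> G S (x - m) = a"
proof -
  have "a \<in> (\<lambda>s. G S (x - s)) ` {s \<in> S. 0 < s \<and> s \<le> x}"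
    using assms by (subst (asm) G.simps) (rule less_mex_imp_mem)
  then show ?thesis
    by auto
qed

lemma G_unique:
  assumes "\<And>x. f x = mex ((\<lambda>s. f (x - s)) ` {s \<in> S. 0 < s \<and> s \<le> x})"
  shows "f x = G S x"
proof (induction x rule: less_induct)
  case (less x)
  have "(\<lambda>s. f (x - s)) ` {s \<in> S. 0 < s \<and> s \<le> x} = (\<lambda>s. G S (x - s)) ` {s \<in> S. 0 < s \<and> s \<le> x}"
    using less by (intro image_cong) auto
  then show ?case
    by (subst assms, subst G.simps) simp
qed

lemma mult_add_less_mult_add_iff:
  fixes a b c d h :: nat
  assumes "b < h" "d < h"
  shows "a * h + b < c * h + d \<longleftrightarrow> a < c \<or> a = c \<and> b < d"
proof -
  have carry: "x * h + y < z * h" if "x < z" "y < h" for x y z :: nat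
  proof -
    have "x * h + y < Suc x * h" using \<open>y < h\<close> by simp
    also have "\<dots> \<le> z * h" using \<open>x < z\<close> by (intro mult_le_mono1) simp
    finally show ?thesis .
  qed
  show ?thesis
    using carry[of a c b] carry[of c a d] assms by (cases a c rule: linorder_cases) auto
qed

lemma div_diff_of_dvd:
  fixes n t h :: nat
  assumes "t \<le> n" "h dvd n - t"
  shows "(n - t) div h = n div h - t div h"
proof -
  obtain k where "n = t + h * k"
    using assms by (metis dvdE le_add_diff_inverse)
  then show ?thesis
    by (cases "h = 0") simp_all
qed

definition scaled_moves :: "nat \<Rightarrow> nat set \<Rightarrow> nat set" where
  "scaled_moves h S = {k. 0 < k} - {m * h | m. 0 < m \<and> m \<notin> S}"

definition scaled_G :: "nat \<Rightarrow> nat set \<Rightarrow> nat \<Rightarrow> nat" where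
  "scaled_G h S n = G S (n div h) * h + n mod h"

lemma mem_scaled_moves_iff:
  assumes "0 < h"
  shows "k \<in> scaled_moves h S \<longleftrightarrow> 0 < k \<and> (h dvd k \<longrightarrow> k div h \<in> S)"
  using assms unfolding scaled_moves_def by (auto elim!: dvdE)

lemma scaled_G_eq_iff:
  assumes "0 < h"
  shows "scaled_G h S x = scaled_G h S y \<longleftrightarrow> G S (x div h) = G S (y div h) \<and> x mod h = y mod h"
proof -
  have "scaled_G h S z div h = G S (z div h)" "scaled_G h S z mod h = z mod h" for z
    using assms unfolding scaled_G_def by simp_all
  then show ?thesis
    by (metis div_mult_mod_eq)
qed

lemma scaled_G_move_neq:
  assumes "0 < h" "s \<in> scaled_moves h S" "s \<le> n"
  shows "scaled_G h S (n - s) \<noteq> scaled_G h S n"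
proof
  assume "scaled_G h S (n - s) = scaled_G h S n"
  then have same_G: "G S ((n - s) div h) = G S (n div h)" and "(n - s) mod h = n mod h"
    using assms(1) by (simp_all add: scaled_G_eq_iff)
  then have "h dvd s"
    using assms(3) mod_eq_dvd_iff_nat[of "n - s" n h] by simp
  define m where "m = s div h"
  have "m \<in> S" "0 < m"
    using assms \<open>h dvd s\<close> by (auto simp: mem_scaled_moves_iff m_def elim!: dvdE)
  moreover have "m = n div h - (n - s) div h" "(n - s) div h \<le> n div h"
    using assms(3) \<open>h dvd s\<close> div_diff_of_dvd[of "n - s" n h] by (simp_all add: m_def div_le_mono)
  then have "m \<le> n div h" "(n - s) div h = n div h - m"
    by simp_all
  ultimately show False
    using same_G G_move_neq by metis
qed

lemma diff_mem_scaled_moves: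
  assumes "0 < h" "t < n" "t mod h = n mod h \<longrightarrow> n div h - t div h \<in> S"
  shows "n - t \<in> scaled_moves h S"
proof -
  have "(n - t) div h \<in> S" if "h dvd n - t"
  proof -
    have "t mod h = n mod h"
      using that assms(2) mod_eq_dvd_iff_nat[of t n h] by simp
    then show ?thesis
      using assms that by (simp add: div_diff_of_dvd)
  qed
  then show ?thesis
    using assms by (simp add: mem_scaled_moves_iff)
qed

lemma scaled_G_reaches_less:
  assumes "0 < h" "w < scaled_G h S n"
  shows "\<exists>s\<in>scaled_moves h S. 0 < s \<and> s \<le> n \<and> scaled_G h S (n - s) = w"
proof -
  define q r a b where "q = n div h" "r = n mod h" "a = w div h" "b = w mod h"
  have n: "n = q * h + r" and w: "w = a * h + b" and "r < h" "b < h"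
    using assms(1) by (simp_all add: q_r_a_b_def)
  have "a * h + b < G S q * h + r"
    using assms(2) by (simp add: scaled_G_def q_r_a_b_def w[symmetric])
  then have "a < G S q \<or> a = G S q \<and> b < r"
    using \<open>b < h\<close> \<open>r < h\<close> by (simp add: mult_add_less_mult_add_iff)
  then obtain t where "t < n" "scaled_G h S t = w" "t mod h = n mod h \<longrightarrow> n div h - t div h \<in> S"
  proof
    assume "a < G S q"
    then obtain m where "m \<in> S" "0 < m" "m \<le> q" "G S (q - m) = a"
      using G_reaches_less by blast
    moreover have "(q - m) * h + b < n"
      using \<open>b < h\<close> \<open>r < h\<close> \<open>0 < m\<close> \<open>m \<le> q\<close> by (simp add: n mult_add_less_mult_add_iff)
    ultimately show ?thesis
      using \<open>b < h\<close> \<open>r < h\<close> that[of "(q - m) * h + b"] by (simp add: scaled_G_def w n)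
  next
    assume "a = G S q \<and> b < r"
    then show ?thesis
      using \<open>b < h\<close> \<open>r < h\<close> that[of "q * h + b"] by (simp add: scaled_G_def w n)
  qed
  then show ?thesis
    using assms(1) diff_mem_scaled_moves[of h t n S] by (intro bexI[of _ "n - t"]) auto
qed

theorem theorem2p2:
  fixes h :: nat and S :: "nat set" and n :: nat
  assumes "0 < h"
    and "\<forall>s\<in>S. 0 < s"
  shows "G ({k. 0 < k} - {m * h | m. 0 < m \<and> m \<notin> S}) n
           = G S (n div h) * h + n mod h"
proof -
  have "scaled_G h S x
      = mex ((\<lambda>s. scaled_G h S (x - s)) ` {s \<in> scaled_moves h S. 0 < s \<and> s \<le> x})" for x
    by (intro mex_eqI[symmetric])
      (fastforce dest: scaled_G_move_neq[OF assms(1)], fastforce dest: scaled_G_reaches_less[OF assms(1)])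
  then have "scaled_G h S n = G (scaled_moves h S) n"
    by (rule G_unique)
  then show ?thesis
    by (simp add: scaled_G_def scaled_moves_def)
qed

end
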